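(* Let $R$ be an NJ-symmetric ring. If every maximal essential left ideal of $R$ is a two-sided ideal (i.e. $R$ is MELT), then $R$ is left quasi-duo; and (right-hand version) if every maximal essential right ideal of $R$ is a two-sided ideal, then $R$ is right quasi-duo.
   Context: Rings are associative with identity. $N(R)$ is the set of nilpotent elements, $J(R)$ the Jacobson radical. $R$ is NJ-symmetric if for all $a,b,c\in R$, $abc\in N(R)$ implies $bac\in J(R)$. $R$ is left (right) quasi-duo if every maximal left (right) ideal is a two-sided ideal. *)

theory Defs
  imports Main
begin

definition nilpotent_elems :: "'a::ring_1 set" where
  "nilpotent_elems = {x. \<exists>n::nat. x ^ n = 0}"

definition additive_subgroup :: "'a::ring_1 set \<Rightarrow> bool" where
  "additive_subgroup I \<longleftrightarrow> 0 \<in> I \<and> (\<forall>x\<in>I. \<forall>y\<in>I. x + y \<in> I) \<and> (\<forall>x\<in>I. - x \<in> I)"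

definition left_ideal :: "'a::ring_1 set \<Rightarrow> bool" where
  "left_ideal I \<longleftrightarrow> additive_subgroup I \<and> (\<forall>r. \<forall>x\<in>I. r * x \<in> I)"

definition right_ideal :: "'a::ring_1 set \<Rightarrow> bool" where
  "right_ideal I \<longleftrightarrow> additive_subgroup I \<and> (\<forall>r. \<forall>x\<in>I. x * r \<in> I)"

definition two_sided_ideal :: "'a::ring_1 set \<Rightarrow> bool" where
  "two_sided_ideal I \<longleftrightarrow> left_ideal I \<and> right_ideal I"

definition maximal_left_ideal :: "'a::ring_1 set \<Rightarrow> bool" where
  "maximal_left_ideal M \<longleftrightarrow> left_ideal M \<and> M \<noteq> UNIV \<and>
     (\<forall>I. left_ideal I \<and> M \<subseteq> I \<and> I \<noteq> UNIV \<longrightarrow> I = M)"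

definition maximal_right_ideal :: "'a::ring_1 set \<Rightarrow> bool" where
  "maximal_right_ideal M \<longleftrightarrow> right_ideal M \<and> M \<noteq> UNIV \<and>
     (\<forall>I. right_ideal I \<and> M \<subseteq> I \<and> I \<noteq> UNIV \<longrightarrow> I = M)"

definition essential_left_ideal :: "'a::ring_1 set \<Rightarrow> bool" where
  "essential_left_ideal L \<longleftrightarrow> left_ideal L \<and>
     (\<forall>K. left_ideal K \<and> K \<noteq> {0} \<longrightarrow> L \<inter> K \<noteq> {0})"

definition essential_right_ideal :: "'a::ring_1 set \<Rightarrow> bool" where
  "essential_right_ideal L \<longleftrightarrow> right_ideal L \<and>
     (\<forall>K. right_ideal K \<and> K \<noteq> {0} \<longrightarrow> L \<inter> K \<noteq> {0})"

definition jacobson_radical :: "'a::ring_1 set" where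
  "jacobson_radical = \<Inter> {M. maximal_left_ideal M}"

definition NJ_symmetric :: "'a::ring_1 itself \<Rightarrow> bool" where
  "NJ_symmetric _ \<longleftrightarrow> (\<forall>a b c::'a. a * b * c \<in> nilpotent_elems \<longrightarrow> b * a * c \<in> jacobson_radical)"

definition left_quasi_duo :: "'a::ring_1 itself \<Rightarrow> bool" where
  "left_quasi_duo _ \<longleftrightarrow> (\<forall>M::'a set. maximal_left_ideal M \<longrightarrow> two_sided_ideal M)"

definition right_quasi_duo :: "'a::ring_1 itself \<Rightarrow> bool" where
  "right_quasi_duo _ \<longleftrightarrow> (\<forall>M::'a set. maximal_right_ideal M \<longrightarrow> two_sided_ideal M)"

definition MELT :: "'a::ring_1 itself \<Rightarrow> bool" where
  "MELT _ \<longleftrightarrow> (\<forall>M::'a set. maximal_left_ideal M \<and> essential_left_ideal M \<longrightarrow> two_sided_ideal M)"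

definition MERT :: "'a::ring_1 itself \<Rightarrow> bool" where
  "MERT _ \<longleftrightarrow> (\<forall>M::'a set. maximal_right_ideal M \<and> essential_right_ideal M \<longrightarrow> two_sided_ideal M)"

end

(* If a maximal left ideal M is not essential, it is a direct summand: M = R(1 - e) = {x. x e = 0}
   for an idempotent e.  NJ-symmetry applied to e ((1 - e) r) e = 0 puts the corner (1 - e) R e
   into the Jacobson radical, hence into M, so (1 - e) R e = 0 and M is closed under right
   multiplication.  A non-essential maximal right ideal is M = (1 - e) R, so eR (isomorphic to
   R/M) is simple, and one needs e R (1 - e) = 0: a nonzero e r (1 - e) would generate eR, so
   e = e r (1 - e) s e would lie in the radical, which no nonzero idempotent does (by Zorn's
   lemma some maximal left ideal contains R(1 - e) but not e). *)

theory Submission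
  imports Defs "HOL-Library.Set_Algebras"
begin

lemma left_ideal_zero: "left_ideal I \<Longrightarrow> 0 \<in> I"
  and left_ideal_add: "left_ideal I \<Longrightarrow> x \<in> I \<Longrightarrow> y \<in> I \<Longrightarrow> x + y \<in> I"
  and left_ideal_diff: "left_ideal I \<Longrightarrow> x \<in> I \<Longrightarrow> y \<in> I \<Longrightarrow> x - y \<in> I"
  and left_ideal_mult_left: "left_ideal I \<Longrightarrow> x \<in> I \<Longrightarrow> r * x \<in> I"
  unfolding left_ideal_def additive_subgroup_def
  by (auto simp: diff_conv_add_uminus simp del: add_uminus_conv_diff)

lemma right_ideal_zero: "right_ideal I \<Longrightarrow> 0 \<in> I"
  and right_ideal_diff: "right_ideal I \<Longrightarrow> x \<in> I \<Longrightarrow> y \<in> I \<Longrightarrow> x - y \<in> I"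
  and right_ideal_mult_right: "right_ideal I \<Longrightarrow> x \<in> I \<Longrightarrow> x * r \<in> I"
  unfolding right_ideal_def additive_subgroup_def
  by (auto simp: diff_conv_add_uminus simp del: add_uminus_conv_diff)

lemma additive_subgroup_set_plus:
  assumes I: "additive_subgroup I" and K: "additive_subgroup K"
  shows "additive_subgroup (I + K)"
  unfolding additive_subgroup_def
proof (intro conjI ballI)
  show "0 \<in> I + K"
    using set_plus_intro[of 0 I 0 K] I K by (simp add: additive_subgroup_def)
next
  fix x y assume "x \<in> I + K" "y \<in> I + K"
  then obtain a b c d where "x = a + b" "y = c + d" "a \<in> I" "b \<in> K" "c \<in> I" "d \<in> K"
    by (meson set_plus_elim)
  then show "x + y \<in> I + K"
    using set_plus_intro[of "a + c" I "b + d" K] I K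
    by (simp add: additive_subgroup_def algebra_simps)
next
  fix x assume "x \<in> I + K"
  then obtain a b where "x = a + b" "a \<in> I" "b \<in> K"
    by (meson set_plus_elim)
  then show "- x \<in> I + K"
    using set_plus_intro[of "- a" I "- b" K] I K
    by (simp add: additive_subgroup_def algebra_simps)
qed

lemma left_ideal_set_plus: "left_ideal I \<Longrightarrow> left_ideal K \<Longrightarrow> left_ideal (I + K)"
  unfolding left_ideal_def using additive_subgroup_set_plus
  by (auto simp: set_plus_def distrib_left) blast

lemma right_ideal_set_plus: "right_ideal I \<Longrightarrow> right_ideal K \<Longrightarrow> right_ideal (I + K)"
  unfolding right_ideal_def using additive_subgroup_set_plus
  by (auto simp: set_plus_def distrib_right) blast

lemma left_ideal_range_mult_right: "left_ideal (range (\<lambda>r. r * a))"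
  unfolding left_ideal_def additive_subgroup_def
proof (intro conjI ballI allI)
  show "0 \<in> range (\<lambda>r. r * a)"
    using rangeI[of "\<lambda>r. r * a" 0] by simp
  fix x y assume "x \<in> range (\<lambda>r. r * a)" "y \<in> range (\<lambda>r. r * a)"
  then obtain u v where "x = u * a" "y = v * a" by blast
  then show "x + y \<in> range (\<lambda>r. r * a)" "- x \<in> range (\<lambda>r. r * a)"
    and "\<And>r. r * x \<in> range (\<lambda>r. r * a)"
    using rangeI[of "\<lambda>r. r * a" "u + v"] rangeI[of "\<lambda>r. r * a" "- u"]
      rangeI[of "\<lambda>r. r * a" "_ * u"]
    by (simp_all add: distrib_right mult.assoc)
qed

lemma right_ideal_range_mult_left: "right_ideal (range (\<lambda>r. a * r))"
  unfolding right_ideal_def additive_subgroup_def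
proof (intro conjI ballI allI)
  show "0 \<in> range (\<lambda>r. a * r)"
    using rangeI[of "\<lambda>r. a * r" 0] by simp
  fix x y assume "x \<in> range (\<lambda>r. a * r)" "y \<in> range (\<lambda>r. a * r)"
  then obtain u v where "x = a * u" "y = a * v" by blast
  then show "x + y \<in> range (\<lambda>r. a * r)" "- x \<in> range (\<lambda>r. a * r)"
    and "\<And>r. x * r \<in> range (\<lambda>r. a * r)"
    using rangeI[of "\<lambda>r. a * r" "u + v"] rangeI[of "\<lambda>r. a * r" "- u"]
      rangeI[of "\<lambda>r. a * r" "u * _"]
    by (simp_all add: distrib_left mult.assoc)
qed

lemma left_ideal_eq_UNIV_iff: "left_ideal I \<Longrightarrow> I = UNIV \<longleftrightarrow> 1 \<in> I"
  using left_ideal_mult_left[of I 1] by auto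

lemma maximal_left_ideal_set_plus_eq_UNIV:
  assumes M: "maximal_left_ideal M" and K: "left_ideal K" "\<not> K \<subseteq> M"
  shows "M + K = UNIV"
proof -
  have "M \<subseteq> M + K"
    using set_plus_intro[of _ M 0 K] left_ideal_zero[OF K(1)] by auto
  moreover have "K \<subseteq> M + K"
    using set_plus_intro[of 0 M _ K] M left_ideal_zero by (auto simp: maximal_left_ideal_def)
  moreover have "left_ideal (M + K)"
    using M K left_ideal_set_plus by (auto simp: maximal_left_ideal_def)
  ultimately show ?thesis
    using M K(2) unfolding maximal_left_ideal_def by blast
qed

lemma maximal_right_ideal_set_plus_eq_UNIV:
  assumes M: "maximal_right_ideal M" and K: "right_ideal K" "\<not> K \<subseteq> M"
  shows "M + K = UNIV"
proof -
  have "M \<subseteq> M + K"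
    using set_plus_intro[of _ M 0 K] right_ideal_zero[OF K(1)] by auto
  moreover have "K \<subseteq> M + K"
    using set_plus_intro[of 0 M _ K] M right_ideal_zero by (auto simp: maximal_right_ideal_def)
  moreover have "right_ideal (M + K)"
    using M K right_ideal_set_plus by (auto simp: maximal_right_ideal_def)
  ultimately show ?thesis
    using M K(2) unfolding maximal_right_ideal_def by blast
qed

lemma non_essential_maximal_left_ideal_eq_annihilator:
  assumes M: "maximal_left_ideal M" and ness: "\<not> essential_left_ideal M"
  obtains e where "e * e = e" and "M = {x. x * e = 0}"
proof -
  have LM: "left_ideal M"
    using M by (simp add: maximal_left_ideal_def)
  obtain K where K: "left_ideal K" "K \<noteq> {0}" and MK: "M \<inter> K = {0}"
    using ness LM unfolding essential_left_ideal_def by blast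
  have "\<not> K \<subseteq> M"
    using K MK left_ideal_zero by blast
  then have "1 \<in> M + K"
    using maximal_left_ideal_set_plus_eq_UNIV[OF M K(1)] by simp
  then obtain m e where 1: "1 = m + e" and m: "m \<in> M" and e: "e \<in> K"
    by (meson set_plus_elim)
  have M_eq: "M = {x. x * e = 0}"
  proof (intro set_eqI iffI; simp)
    fix x assume x: "x \<in> M"
    have "x * e = x - x * m"
      using 1 by (metis add_diff_cancel_left' distrib_left mult.right_neutral)
    then have "x * e \<in> M"
      using left_ideal_diff[OF LM x left_ideal_mult_left[OF LM m]] by simp
    then show "x * e = 0"
      using left_ideal_mult_left[OF K(1) e] MK by blast
  next
    fix x assume "x * e = 0"
    then have "x = x * m"
      using 1 by (metis add.right_neutral distrib_left mult.right_neutral)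
    then show "x \<in> M"
      using left_ideal_mult_left[OF LM m] by metis
  qed
  have "m * e = 0"
    using m M_eq by blast
  then have "e * e = e"
    using 1 by (metis add_0 distrib_right mult_1_left)
  with M_eq that show thesis by blast
qed

lemma non_essential_maximal_right_ideal_eq_annihilator:
  assumes M: "maximal_right_ideal M" and ness: "\<not> essential_right_ideal M"
  obtains e where "e * e = e" and "M = {x. e * x = 0}"
proof -
  have RM: "right_ideal M"
    using M by (simp add: maximal_right_ideal_def)
  obtain K where K: "right_ideal K" "K \<noteq> {0}" and MK: "M \<inter> K = {0}"
    using ness RM unfolding essential_right_ideal_def by blast
  have "\<not> K \<subseteq> M"
    using K MK right_ideal_zero by blast
  then have "1 \<in> M + K"
    using maximal_right_ideal_set_plus_eq_UNIV[OF M K(1)] by simp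
  then obtain m e where 1: "1 = m + e" and m: "m \<in> M" and e: "e \<in> K"
    by (meson set_plus_elim)
  have M_eq: "M = {x. e * x = 0}"
  proof (intro set_eqI iffI; simp)
    fix x assume x: "x \<in> M"
    have "e * x = x - m * x"
      using 1 by (metis add_diff_cancel_left' distrib_right mult_1_left)
    then have "e * x \<in> M"
      using right_ideal_diff[OF RM x right_ideal_mult_right[OF RM m]] by simp
    then show "e * x = 0"
      using right_ideal_mult_right[OF K(1) e] MK by blast
  next
    fix x assume "e * x = 0"
    then have "x = m * x"
      using 1 by (metis add.right_neutral distrib_right mult_1_left)
    then show "x \<in> M"
      using right_ideal_mult_right[OF RM m] by metis
  qed
  have "e * m = 0"
    using m M_eq by blast
  then have "e * e = e"
    using 1 by (metis add_0 distrib_left mult.right_neutral)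
  with M_eq that show thesis by blast
qed

lemma maximal_right_annihilator_generator:
  assumes M: "maximal_right_ideal {x. e * x = 0}" and d: "e * d = d" "d \<noteq> 0"
  obtains s where "d * s = e"
proof -
  have "\<not> range (\<lambda>r. d * r) \<subseteq> {x. e * x = 0}"
    using d rangeI[of "\<lambda>r. d * r" 1] by auto
  then have "1 \<in> {x. e * x = 0} + range (\<lambda>r. d * r)"
    using maximal_right_ideal_set_plus_eq_UNIV[OF M right_ideal_range_mult_left] by simp
  then obtain m s where "1 = m + d * s" "e * m = 0"
    by (auto elim: set_plus_elim)
  then have "e = d * s"
    using d(1) by (metis add_0 distrib_left mult.assoc mult.right_neutral)
  with that show thesis by simp
qed

lemma left_ideal_Union_chain:
  assumes "C \<noteq> {}" and ideals: "\<And>J. J \<in> C \<Longrightarrow> left_ideal J"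
    and chain: "\<And>J K. J \<in> C \<Longrightarrow> K \<in> C \<Longrightarrow> J \<subseteq> K \<or> K \<subseteq> J"
  shows "left_ideal (\<Union>C)"
  unfolding left_ideal_def additive_subgroup_def
proof (intro conjI ballI allI)
  show "0 \<in> \<Union>C"
    using \<open>C \<noteq> {}\<close> ideals left_ideal_zero by blast
  fix x y r assume "x \<in> \<Union>C" "y \<in> \<Union>C"
  then obtain Jx Jy where x: "x \<in> Jx" "Jx \<in> C" and y: "y \<in> Jy" "Jy \<in> C" by blast
  then have "x + y \<in> Jx \<union> Jy"
    using chain[OF x(2) y(2)] left_ideal_add[OF ideals[OF x(2)], of x y]
      left_ideal_add[OF ideals[OF y(2)], of x y] by blast
  then show "x + y \<in> \<Union>C"
    using x(2) y(2) by blast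
  show "- x \<in> \<Union>C" "r * x \<in> \<Union>C"
    using x ideals[OF x(2)] left_ideal_mult_left[of Jx x] left_ideal_mult_left[of Jx x "- 1"] by auto
qed

lemma left_ideal_extends_to_maximal:
  assumes I: "left_ideal I" "1 \<notin> I"
  obtains M where "maximal_left_ideal M" "I \<subseteq> M"
proof -
  let ?A = "{J. left_ideal J \<and> I \<subseteq> J \<and> 1 \<notin> J}"
  have "\<Union>C \<in> ?A" if C: "C \<noteq> {}" "subset.chain ?A C" for C
  proof -
    have "C \<subseteq> ?A" "\<And>J K. J \<in> C \<Longrightarrow> K \<in> C \<Longrightarrow> J \<subseteq> K \<or> K \<subseteq> J"
      using C(2) unfolding subset.chain_def by auto
    then have "left_ideal (\<Union>C)"
      using left_ideal_Union_chain[OF C(1)] by blast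
    with \<open>C \<subseteq> ?A\<close> C(1) show ?thesis by blast
  qed
  then obtain M where M: "M \<in> ?A" and max: "\<forall>J\<in>?A. M \<subseteq> J \<longrightarrow> J = M"
    using subset_Zorn_nonempty[of ?A] I by blast
  have "maximal_left_ideal M"
    unfolding maximal_left_ideal_def
  proof (intro conjI allI impI)
    show "left_ideal M" "M \<noteq> UNIV"
      using M by auto
    fix J assume "left_ideal J \<and> M \<subseteq> J \<and> J \<noteq> UNIV"
    then have "J \<in> ?A"
      using M left_ideal_eq_UNIV_iff by blast
    with max \<open>left_ideal J \<and> M \<subseteq> J \<and> J \<noteq> UNIV\<close> show "J = M" by blast
  qed
  with M that show thesis by blast
qed

lemma jacobson_radical_subset: "maximal_left_ideal M \<Longrightarrow> jacobson_radical \<subseteq> M"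
  unfolding jacobson_radical_def by blast

lemma idempotent_in_jacobson_radical:
  assumes ee: "e * e = e" and J: "e \<in> jacobson_radical"
  shows "e = 0"
proof (rule ccontr)
  assume "e \<noteq> 0"
  have "(1 - e) * e = 0"
    using ee by (simp add: left_diff_distrib)
  have "1 \<notin> range (\<lambda>r. r * (1 - e))"
  proof
    assume "1 \<in> range (\<lambda>r. r * (1 - e))"
    then obtain r where "1 = r * (1 - e)" by blast
    then have "e = r * ((1 - e) * e)"
      by (metis mult.assoc mult_1_left)
    with \<open>(1 - e) * e = 0\<close> \<open>e \<noteq> 0\<close> show False by simp
  qed
  then obtain M where M: "maximal_left_ideal M" "range (\<lambda>r. r * (1 - e)) \<subseteq> M"
    using left_ideal_extends_to_maximal left_ideal_range_mult_right by blast
  have "1 - e \<in> M"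
    using M(2) rangeI[of "\<lambda>r. r * (1 - e)" 1] by auto
  moreover have "e \<in> M"
    using M(1) J jacobson_radical_subset by blast
  ultimately have "1 \<in> M"
    using left_ideal_add[of M "1 - e" e] M(1) by (simp add: maximal_left_ideal_def)
  then show False
    using M(1) left_ideal_eq_UNIV_iff unfolding maximal_left_ideal_def by blast
qed

lemma jacobson_radical_mult_left: "y \<in> jacobson_radical \<Longrightarrow> a * y \<in> jacobson_radical"
  unfolding jacobson_radical_def maximal_left_ideal_def by (auto intro: left_ideal_mult_left)

lemma NJ_symmetricD:
  assumes "NJ_symmetric TYPE('a::ring_1)" and "(a::'a) * b * c = 0"
  shows "b * a * c \<in> jacobson_radical"
proof -
  have "a * b * c \<in> nilpotent_elems"
    using assms(2) unfolding nilpotent_elems_def by (auto intro: exI[of _ 1])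
  then show ?thesis
    using assms(1) unfolding NJ_symmetric_def by simp
qed

lemma NJ_symmetric_idempotent_corner:
  assumes NJ: "NJ_symmetric TYPE('a::ring_1)" and ee: "(e::'a) * e = e"
  shows "(1 - e) * r * e \<in> jacobson_radical"
proof -
  have "e * ((1 - e) * r) * e = (e - e * e) * r * e"
    by (simp add: algebra_simps)
  then have "e * ((1 - e) * r) * e = 0"
    using ee by simp
  then have "(1 - e) * r * e * e \<in> jacobson_radical"
    by (rule NJ_symmetricD[OF NJ])
  with ee show ?thesis
    by (simp add: mult.assoc)
qed

lemma NJ_symmetric_maximal_left_ideal_two_sided:
  fixes M :: "'a::ring_1 set"
  assumes NJ: "NJ_symmetric TYPE('a)" and M: "maximal_left_ideal M"
    and ness: "\<not> essential_left_ideal M"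
  shows "two_sided_ideal M"
proof -
  obtain e where ee: "e * e = e" and M_eq: "M = {x. x * e = 0}"
    using non_essential_maximal_left_ideal_eq_annihilator[OF M ness] .
  have corner: "(1 - e) * r * e = 0" for r
  proof -
    have "(1 - e) * r * e \<in> M"
      using NJ_symmetric_idempotent_corner[OF NJ ee] jacobson_radical_subset[OF M] by blast
    with M_eq ee show ?thesis
      by (simp add: mult.assoc)
  qed
  have "x * r \<in> M" if "x \<in> M" for x r
  proof -
    have "x * r * e = x * ((1 - e) * r * e) + (x * e) * r * e"
      by (simp add: algebra_simps)
    with corner that M_eq show ?thesis by simp
  qed
  then show ?thesis
    using M unfolding two_sided_ideal_def right_ideal_def maximal_left_ideal_def left_ideal_def
    by blast
qed

lemma NJ_symmetric_maximal_right_ideal_two_sided: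
  fixes M :: "'a::ring_1 set"
  assumes NJ: "NJ_symmetric TYPE('a)" and M: "maximal_right_ideal M"
    and ness: "\<not> essential_right_ideal M"
  shows "two_sided_ideal M"
proof -
  obtain e where ee: "e * e = e" and M_eq: "M = {x. e * x = 0}"
    using non_essential_maximal_right_ideal_eq_annihilator[OF M ness] .
  have "e \<noteq> 0"
    using M M_eq by (auto simp: maximal_right_ideal_def)
  have corner: "e * r * (1 - e) = 0" for r
  proof (rule ccontr)
    assume "e * r * (1 - e) \<noteq> 0"
    moreover have "e * (e * r * (1 - e)) = e * r * (1 - e)"
      using ee by (simp add: mult.assoc[symmetric])
    ultimately obtain s where s: "e * r * (1 - e) * s = e"
      using maximal_right_annihilator_generator M M_eq by metis
    have "e * r * ((1 - e) * s * e) \<in> jacobson_radical"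
      using NJ_symmetric_idempotent_corner[OF NJ ee] by (rule jacobson_radical_mult_left)
    moreover have "e * r * ((1 - e) * s * e) = e"
      using s ee by (simp add: mult.assoc[symmetric])
    ultimately show False
      using idempotent_in_jacobson_radical ee \<open>e \<noteq> 0\<close> by metis
  qed
  have "r * x \<in> M" if "x \<in> M" for x r
  proof -
    have "e * (r * x) = (e * r * (1 - e)) * x + e * r * (e * x)"
      by (simp add: algebra_simps)
    with corner that M_eq show ?thesis by simp
  qed
  then show ?thesis
    using M unfolding two_sided_ideal_def right_ideal_def maximal_right_ideal_def left_ideal_def
    by blast
qed

theorem theorem2p8:
  assumes "NJ_symmetric TYPE('a::ring_1)"
  shows "(MELT TYPE('a) \<longrightarrow> left_quasi_duo TYPE('a))
       \<and> (MERT TYPE('a) \<longrightarrow> right_quasi_duo TYPE('a))"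
  using NJ_symmetric_maximal_left_ideal_two_sided[OF assms]
    NJ_symmetric_maximal_right_ideal_two_sided[OF assms]
  unfolding MELT_def MERT_def left_quasi_duo_def right_quasi_duo_def
  by blast

end
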